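(* Let $d\ge 2$ be an integer and let $t \in \left[-\frac{1}{d^2-1}, \frac{1}{d+1}\right] \setminus \{0\}$. Suppose that there exist real weights $w_1,\dots,w_{d^2} \ge 0$ with $\sum_{i=1}^{d^2} w_i = 1$ and unit vectors $|x_1\rangle,\dots,|x_{d^2}\rangle$ and $|y_1\rangle,\dots,|y_{d^2}\rangle$ in $\mathbb{C}^d$ such that $$\sum_{i=1}^{d^2} w_i\, |x_i\rangle\langle x_i| \otimes |y_i\rangle\langle y_i| = \frac{t}{d}U_{SW} + \frac{1-t}{d^2} I_{d^2}$$ (equivalently $=\frac{2t}{d}\Pi_{sym} + \frac{1-t(d+1)}{d^2}I_{d^2}$). Then $w_i = \frac{1}{d^2}$ for all $i$, the frames $\{|x_i\rangle\}_{i=1}^{d^2}$ and $\{|y_i\rangle\}_{i=1}^{d^2}$ are tight and informationally complete, and, after a suitable choice of phases of the vectors $|x_i\rangle$, $|y_i\rangle$, for all $i \neq j$: $$|\langle x_i|y_j\rangle|^2 = \frac{1-t}{d},\qquad \langle x_i|y_i\rangle = \sqrt{\frac{t(d^2-1)+1}{d}},\qquad \langle x_j|x_i\rangle\langle y_i|y_j\rangle = t.$$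
   Context: $U_{SW}$ is the swap operator on $\mathbb{C}^d\otimes\mathbb{C}^d$, $U_{SW}(|u\rangle\otimes|v\rangle)=|v\rangle\otimes|u\rangle$; $\Pi_{sym}=\frac12(I_{d^2}+U_{SW})$. A set of unit vectors $\{|x_i\rangle\}_{i=1}^n\subset\mathbb{C}^d$ is a tight frame if $\sum_i |x_i\rangle\langle x_i| = cI_d$ for some real $c\ge 0$ (necessarily $c=n/d$). It is informationally complete if the projectors $|x_i\rangle\langle x_i|$ span the space of all complex $d\times d$ matrices. (The left-hand side of the hypothesis is a decomposition showing that the partial transpose of the isotropic state has length of separability $d^2$.) *)

theory Defs
  imports "HOL-Analysis.Analysis"
begin

text \<open>Vectors in C^d are elements of complex^('n::finite) with d = CARD('n);
operators on C^d are matrices complex^('n::finite)^'n; operators on C^d (x) C^d are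
matrices indexed by 'n * 'n.\<close>

definition braket :: "complex^('n::finite) \<Rightarrow> complex^('n::finite) \<Rightarrow> complex" where
  "braket x y = (\<Sum>k\<in>UNIV. cnj (x$k) * y$k)"

definition outer :: "complex^('n::finite) \<Rightarrow> complex^('n::finite)^'n" where
  "outer x = (\<chi> a b. x$a * cnj (x$b))"

definition kron :: "complex^('n::finite)^'n \<Rightarrow> complex^('n::finite)^'n \<Rightarrow> complex^('n::finite \<times> 'n)^('n \<times> 'n)" where
  "kron A B = (\<chi> p q. A$(fst p)$(fst q) * B$(snd p)$(snd q))"

text \<open>The swap operator: U_SW (e_a (x) e_b) = e_b (x) e_a.\<close>
definition swap_op :: "complex^('n::finite \<times> 'n)^('n \<times> 'n)" where
  "swap_op = (\<chi> p q. if fst p = snd q \<and> snd p = fst q then 1 else 0)"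

definition tight_frame :: "nat \<Rightarrow> (nat \<Rightarrow> complex^('n::finite)) \<Rightarrow> bool" where
  "tight_frame n x \<longleftrightarrow> (\<exists>c::real. c \<ge> 0 \<and> (\<Sum>i<n. outer (x i)) = c *\<^sub>R mat 1)"

definition inf_complete :: "nat \<Rightarrow> (nat \<Rightarrow> complex^('n::finite)) \<Rightarrow> bool" where
  "inf_complete n x \<longleftrightarrow>
     (\<forall>M :: complex^('n::finite)^'n. \<exists>c :: nat \<Rightarrow> complex. M = (\<Sum>i<n. (\<chi> a b. c i * (outer (x i))$a$b)))"

end

theory Submission
  imports Defs
begin

(*
  Write the state as A U_SW + B I with A = t/d and B = (1 - t)/d^2. It is the weighted frame
  operator of the d^2 product vectors x_i (x) y_i, and M = B I - A U_SW inverts it up to the factor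
  B^2 - A^2. For any frame of exactly dim-many vectors whose frame operator is inverted by M, the
  identity sum_k w_k |<v_k|M v_i>|^2 = c <v_i|M v_i> together with its trace forces
  w_i <v_i|M v_i> = c and <v_k|M v_i> = 0 for k <> i. The partial transpose A |Phi><Phi| + B I,
  the frame operator of the vectors x_i (x) conj y_i, gives a second identity of this kind;
  together they force w_i = 1/d^2 and |<x_i|y_i>|^2 = (t (d^2 - 1) + 1)/d, and the vanishing
  off-diagonal terms determine the phases of <x_j|x_i><y_i|y_j>. At t = -1/(d^2 - 1) the second
  identity degenerates, and the phases come instead from the Gram matrix of the vectors
  x_i (x) conj y_i, which is then 1 - t times a projection of co-rank one. Tightness and
  informational completeness follow because the partial trace N |-> A N + B tr(N) I of the frame
  is invertible for t <> 0.
*)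

lemma cnj_braket: "cnj (braket x y) = braket y x"
  unfolding braket_def by (simp add: mult.commute)

lemma norm_braket_swap: "cmod (braket x y) = cmod (braket y x)"
  by (metis cnj_braket complex_mod_cnj)

lemma braket_scale_left [simp]: "braket (c *s x) y = cnj c * braket x y"
  unfolding braket_def by (simp add: sum_distrib_left mult_ac)

lemma braket_scale_right [simp]: "braket x (c *s y) = c * braket x y"
  unfolding braket_def by (simp add: sum_distrib_left mult_ac)

lemma braket_add_left [simp]: "braket (x + x') y = braket x y + braket x' y"
  unfolding braket_def by (simp add: sum.distrib algebra_simps)

lemma braket_add_right [simp]: "braket x (y + y') = braket x y + braket x y'"
  unfolding braket_def by (simp add: sum.distrib algebra_simps)

lemma braket_diff_left [simp]: "braket (x - x') y = braket x y - braket x' y"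
  unfolding braket_def by (simp add: sum_subtractf algebra_simps)

lemma braket_diff_right [simp]: "braket x (y - y') = braket x y - braket x y'"
  unfolding braket_def by (simp add: sum_subtractf algebra_simps)

lemma braket_sum_right: "braket x (\<Sum>k\<in>K. f k) = (\<Sum>k\<in>K. braket x (f k))"
  unfolding braket_def by (simp add: sum_distrib_left) (rule sum.swap)

lemma braket_self: "braket x x = of_real ((norm x)\<^sup>2)"
proof -
  have "braket x x = (\<Sum>k\<in>UNIV. of_real ((cmod (x $ k))\<^sup>2))"
    unfolding braket_def
    by (intro sum.cong refl) (simp add: complex_norm_square mult.commute del: of_real_power)
  then show ?thesis
    by (simp add: norm_vec_def L2_set_def sum_nonneg)
qed

lemma braket_self_eq_0_iff [simp]: "braket x x = 0 \<longleftrightarrow> x = 0"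
  by (simp add: braket_self)

lemma braket_axis_left [simp]: "braket (axis a 1) y = y $ a"
  unfolding braket_def axis_def by (simp add: if_distrib if_distribR cong: if_cong)

lemma braket_axis_right [simp]: "braket x (axis a 1) = cnj (x $ a)"
  unfolding braket_def axis_def by (simp add: if_distrib if_distribR cong: if_cong)

lemma braket_resolution: "(\<Sum>e\<in>UNIV. braket x (axis e 1) * braket (axis e 1) y) = braket x y"
  by (simp add: braket_def[of x y])

definition tensor :: "complex^'a::finite \<Rightarrow> complex^'b::finite \<Rightarrow> complex^('a \<times> 'b)" where
  "tensor x y = (\<chi> p. x $ fst p * y $ snd p)"

definition vcnj :: "complex^'a::finite \<Rightarrow> complex^'a" where
  "vcnj x = (\<chi> a. cnj (x $ a))"

definition max_ent :: "complex^('a::finite \<times> 'a)" where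
  "max_ent = (\<chi> p. if fst p = snd p then 1 else 0)"

definition ptrans :: "complex^('a::finite \<times> 'b::finite)^('a \<times> 'b) \<Rightarrow> complex^('a \<times> 'b)^('a \<times> 'b)" where
  "ptrans R = (\<chi> p q. R $ (fst p, snd q) $ (fst q, snd p))"

lemma sum_UNIV_pairs: "(\<Sum>p\<in>UNIV. f p) = (\<Sum>a\<in>UNIV. \<Sum>b\<in>UNIV. f (a, b))"
  by (simp add: sum.cartesian_product)

lemma kron_outer: "kron (outer x) (outer y) = outer (tensor x y)"
  by (simp add: kron_def outer_def tensor_def vec_eq_iff mult_ac)

lemma braket_tensor: "braket (tensor x y) (tensor x' y') = braket x x' * braket y y'"
  unfolding braket_def tensor_def by (simp add: sum_UNIV_pairs sum_product mult_ac)

lemma braket_vcnj: "braket (vcnj x) (vcnj y) = braket y x"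
  unfolding braket_def vcnj_def by (simp add: mult.commute)

lemma braket_max_ent_tensor: "braket max_ent (tensor x (vcnj y)) = braket y x"
  unfolding braket_def max_ent_def tensor_def vcnj_def
  by (simp add: sum_UNIV_pairs if_distrib if_distribR mult.commute cong: if_cong)

lemma braket_tensor_max_ent: "braket (tensor x (vcnj y)) max_ent = braket x y"
  by (metis braket_max_ent_tensor cnj_braket)

lemma braket_max_ent_self: "braket (max_ent :: complex^('a::finite \<times> 'a)) max_ent = of_nat CARD('a)"
  unfolding braket_def max_ent_def by (simp add: sum_UNIV_pairs if_distrib cong: if_cong)

lemma swap_op_apply: "swap_op *v u = (\<chi> p. u $ (snd p, fst p))"
proof -
  have "(if fst p = snd q \<and> snd p = fst q then 1 else 0) = (if q = (snd p, fst p) then 1 else (0::complex))"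
    for p q :: "'a \<times> 'a"
    by (cases p; cases q) auto
  then show ?thesis
    unfolding swap_op_def matrix_vector_mult_def by (simp add: vec_eq_iff mult_if_delta)
qed

lemma swap_op_tensor: "swap_op *v tensor x y = tensor y x"
  by (simp add: swap_op_apply tensor_def vec_eq_iff mult.commute)

lemma braket_swap_op_tensor: "braket (tensor x y) (swap_op *v tensor x y) = of_real ((cmod (braket x y))\<^sup>2)"
proof -
  have "braket y x = cnj (braket x y)"
    by (simp add: cnj_braket)
  then show ?thesis
    by (simp add: swap_op_tensor braket_tensor complex_norm_square del: of_real_power)
qed

lemma braket_swap_op: "braket (swap_op *v u) v = braket u (swap_op *v v)"
proof -
  have "braket (swap_op *v u) v = (\<Sum>a\<in>UNIV. \<Sum>b\<in>UNIV. cnj (u $ (b, a)) * v $ (a, b))"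
    by (simp add: braket_def swap_op_apply sum_UNIV_pairs)
  also have "\<dots> = braket u (swap_op *v v)"
    by (subst sum.swap) (simp add: braket_def swap_op_apply sum_UNIV_pairs)
  finally show ?thesis .
qed

lemma ptrans_outer_tensor: "ptrans (outer (tensor x y)) = outer (tensor x (vcnj y))"
  by (simp add: ptrans_def outer_def tensor_def vcnj_def vec_eq_iff mult_ac)

lemma ptrans_swap_op: "ptrans swap_op = outer max_ent"
  by (auto simp: ptrans_def swap_op_def outer_def max_ent_def vec_eq_iff)

lemma ptrans_mat_1: "ptrans (mat 1) = mat 1"
  by (auto simp: ptrans_def mat_def vec_eq_iff)

lemma ptrans_add: "ptrans (R + S) = ptrans R + ptrans S"
  by (simp add: ptrans_def vec_eq_iff)

lemma ptrans_scaleR: "ptrans (r *\<^sub>R R) = r *\<^sub>R ptrans R"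
  by (simp add: ptrans_def vec_eq_iff)

lemma ptrans_sum: "ptrans (\<Sum>k\<in>K. f k) = (\<Sum>k\<in>K. ptrans (f k))"
  by (simp add: ptrans_def vec_eq_iff)

lemma scaleR_matrix_vector_mult: "(r *\<^sub>R M) *v u = of_real r *s (M *v u :: complex^'a::finite)"
  by (simp add: vec_eq_iff matrix_vector_mult_def sum_distrib_left mult.assoc
      scaleR_conv_of_real [where 'a = complex])

lemma outer_apply: "outer v *v u = braket v u *s v"
  by (simp add: vec_eq_iff matrix_vector_mult_def outer_def braket_def sum_distrib_left mult_ac)

lemma frame_operator_apply:
  "(\<Sum>k\<in>K. w k *\<^sub>R outer (v k)) *v u = (\<Sum>k\<in>K. (of_real (w k) * braket (v k) u) *s v k)"
proof -
  have "((\<Sum>k\<in>K. w k *\<^sub>R outer (v k)) *v u) $ i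
      = (\<Sum>j\<in>UNIV. \<Sum>k\<in>K. of_real (w k) * cnj (v k $ j) * u $ j * v k $ i)" for i
    by (simp add: matrix_vector_mult_def outer_def sum_distrib_right)
      (simp add: scaleR_conv_of_real mult_ac)
  also have "\<dots> i = (\<Sum>k\<in>K. \<Sum>j\<in>UNIV. of_real (w k) * cnj (v k $ j) * u $ j * v k $ i)" for i
    by (rule sum.swap)
  also have "\<dots> i = (\<Sum>k\<in>K. (of_real (w k) * braket (v k) u) * v k $ i)" for i
    by (simp add: braket_def sum_distrib_left sum_distrib_right mult_ac)
  finally show ?thesis
    by (simp add: vec_eq_iff)
qed

lemma diagonal_saturation:
  fixes w q :: "nat \<Rightarrow> real" and h :: "nat \<Rightarrow> nat \<Rightarrow> complex"
  assumes w: "\<And>i. i < n \<Longrightarrow> w i \<ge> 0" and D: "D \<ge> 0"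
    and diag: "\<And>i. i < n \<Longrightarrow> h i i = of_real (q i)"
    and rows: "\<And>i. i < n \<Longrightarrow> (\<Sum>k<n. w k * (cmod (h i k))\<^sup>2) = D * q i"
    and total: "(\<Sum>i<n. w i * q i) = real n * D"
  shows diagonal_saturation_diag: "i < n \<Longrightarrow> w i * q i = D"
    and diagonal_saturation_off_diag: "D > 0 \<Longrightarrow> i < n \<Longrightarrow> k < n \<Longrightarrow> k \<noteq> i \<Longrightarrow> h i k = 0"
proof -
  define rest where "rest i = (\<Sum>k\<in>{..<n} - {i}. w k * (cmod (h i k))\<^sup>2)" for i
  have rest_nonneg: "rest i \<ge> 0" for i
    unfolding rest_def using w by (intro sum_nonneg) auto
  have row_split: "D * q i = w i * (q i)\<^sup>2 + rest i" if "i < n" for i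
    using that rows[OF that] diag[OF that] unfolding rest_def
    by (simp add: sum.remove[of "{..<n}" i])
  have le: "w i * q i \<le> D" if "i < n" for i
  proof (cases "q i > 0")
    case True
    have "(w i * q i) * q i \<le> D * q i"
      using row_split[OF that] rest_nonneg[of i] by (simp add: power2_eq_square mult_ac)
    then show ?thesis
      using True by simp
  next
    case False
    then show ?thesis
      using mult_nonneg_nonpos[of "w i" "q i"] w[OF that] D by linarith
  qed
  have "(\<Sum>i<n. D - w i * q i) = 0"
    using total by (simp add: sum_subtractf)
  then have eq: "w i * q i = D" if "i < n" for i
    using sum_nonneg_eq_0_iff[of "{..<n}" "\<lambda>i. D - w i * q i"] le that by auto
  then show "i < n \<Longrightarrow> w i * q i = D" for i .
  assume "D > 0" "i < n" "k < n" "k \<noteq> i"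
  have "rest i = q i * (D - w i * q i)"
    using row_split[OF \<open>i < n\<close>] by (simp add: power2_eq_square algebra_simps)
  then have "rest i = 0"
    using eq[OF \<open>i < n\<close>] by simp
  then have "w k * (cmod (h i k))\<^sup>2 = 0"
    using sum_nonneg_eq_0_iff[of "{..<n} - {i}" "\<lambda>k. w k * (cmod (h i k))\<^sup>2"] w
      \<open>k < n\<close> \<open>k \<noteq> i\<close> unfolding rest_def by auto
  moreover have "w k \<noteq> 0"
    using eq[OF \<open>k < n\<close>] \<open>D > 0\<close> by auto
  ultimately show "h i k = 0"
    by simp
qed

(*
  The frame operator of the v_k maps M u to c u. Hence
  sum_k w_k |<v_k|M v_i>|^2 = c <v_i|M v_i>, and taking the trace gives
  sum_i w_i <v_i|M v_i> = c n.
*)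
lemma frame_inverse_saturation:
  fixes v :: "nat \<Rightarrow> complex^'m::finite" and M :: "complex^'m \<Rightarrow> complex^'m"
    and w :: "nat \<Rightarrow> real"
  assumes n: "n = CARD('m)" and w_nonneg: "\<forall>i<n. w i \<ge> 0" and c: "c \<ge> 0"
    and inverse: "\<And>u. (\<Sum>k<n. (of_real (w k) * braket (v k) (M u)) *s v k) = of_real c *s u"
    and selfadj: "\<And>u u'. braket (M u) u' = braket u (M u')"
  shows frame_inverse_saturation_diag:
      "i < n \<Longrightarrow> of_real (w i) * braket (v i) (M (v i)) = of_real c"
    and frame_inverse_saturation_off_diag:
      "c > 0 \<Longrightarrow> i < n \<Longrightarrow> k < n \<Longrightarrow> k \<noteq> i \<Longrightarrow> braket (v k) (M (v i)) = 0"
proof -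
  have w: "w i \<ge> 0" if "i < n" for i
    using w_nonneg that by simp
  define h where "h i k = braket (v k) (M (v i))" for i k
  define q where "q i = Re (h i i)" for i
  have diag: "h i i = of_real (q i)" for i
  proof -
    have "cnj (h i i) = h i i"
      unfolding h_def by (simp add: cnj_braket selfadj)
    then show ?thesis
      unfolding q_def by (metis Reals_cnj_iff of_real_Re)
  qed
  have rows: "(\<Sum>k<n. w k * (cmod (h i k))\<^sup>2) = c * q i" for i
  proof -
    have "of_real (\<Sum>k<n. w k * (cmod (h i k))\<^sup>2)
        = (\<Sum>k<n. braket (M (v i)) ((of_real (w k) * braket (v k) (M (v i))) *s v k))"
      unfolding h_def
      by (simp add: complex_norm_square cnj_braket mult_ac del: of_real_power)
    also have "\<dots> = braket (M (v i)) (of_real c *s v i)"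
      by (simp only: braket_sum_right[symmetric] inverse)
    also have "\<dots> = of_real (c * q i)"
      using diag[of i] by (simp add: h_def selfadj)
    finally show ?thesis
      by (simp only: of_real_eq_iff)
  qed
  have total: "(\<Sum>i<n. w i * q i) = real n * c"
  proof -
    have "of_real (\<Sum>i<n. w i * q i) = (\<Sum>i<n. of_real (w i) * braket (M (v i)) (v i))"
      using diag by (simp add: h_def selfadj)
    also have "\<dots> = (\<Sum>i<n. \<Sum>e\<in>UNIV. of_real (w i) * braket (v i) (M (axis e 1)) * braket (axis e 1) (v i))"
    proof (rule sum.cong [OF refl])
      fix i
      show "of_real (w i) * braket (M (v i)) (v i)
          = (\<Sum>e\<in>UNIV. of_real (w i) * braket (v i) (M (axis e 1)) * braket (axis e 1) (v i))"
        using braket_resolution[of "M (v i)" "v i", unfolded selfadj]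
        by (simp add: selfadj mult.assoc flip: sum_distrib_left)
    qed
    also have "\<dots> = (\<Sum>e\<in>UNIV. braket (axis e 1) (\<Sum>i<n. (of_real (w i) * braket (v i) (M (axis e 1))) *s v i))"
      by (subst sum.swap) (simp add: braket_sum_right mult_ac)
    also have "\<dots> = of_real (real n * c)"
      unfolding inverse by (simp add: n)
    finally show ?thesis
      by (simp only: of_real_eq_iff)
  qed
  show "i < n \<Longrightarrow> of_real (w i) * braket (v i) (M (v i)) = of_real c"
    using diagonal_saturation_diag[OF w c diag rows total] diag
    by (simp add: h_def flip: of_real_mult)
  show "c > 0 \<Longrightarrow> i < n \<Longrightarrow> k < n \<Longrightarrow> k \<noteq> i \<Longrightarrow> braket (v k) (M (v i)) = 0"
    using diagonal_saturation_off_diag[OF w c diag rows total] by (simp add: h_def)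
qed

lemma sum_products_eq_sum_squares_imp_eq:
  fixes f g :: "'a \<Rightarrow> real"
  assumes "finite K" and "k \<in> K"
    and "(\<Sum>j\<in>K. (f j)\<^sup>2) = s" and "(\<Sum>j\<in>K. (g j)\<^sup>2) = s" and "(\<Sum>j\<in>K. f j * g j) = s"
  shows "f k = g k"
proof -
  have "(\<Sum>j\<in>K. (f j - g j)\<^sup>2) = 0"
    using assms(3-5)
    by (simp add: power2_diff sum.distrib sum_subtractf mult.assoc flip: sum_distrib_left)
  then have "(f k - g k)\<^sup>2 = 0"
    using sum_nonneg_eq_0_iff[of K "\<lambda>j. (f j - g j)\<^sup>2"] assms(1,2) by simp
  then show ?thesis
    by simp
qed

(*
  S i below equals nu (nu^2 - |N 0 i|^2) >= 0, while sum_i |N 0 i|^2 = N 0 0 = nu = n nu^2;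
  so every S i vanishes and each column of N is proportional to column 0.
*)
lemma constant_diagonal_projection_rank_one:
  fixes N :: "nat \<Rightarrow> nat \<Rightarrow> complex"
  assumes n: "0 < n" and n_nu: "real n * \<nu> = 1"
    and herm: "\<And>k l. k < n \<Longrightarrow> l < n \<Longrightarrow> cnj (N k l) = N l k"
    and idem: "\<And>k i. k < n \<Longrightarrow> i < n \<Longrightarrow> (\<Sum>l<n. N k l * N l i) = N k i"
    and diag: "\<And>k. k < n \<Longrightarrow> N k k = of_real \<nu>"
  shows "\<exists>\<epsilon>. (\<forall>k<n. cmod (\<epsilon> k) = 1) \<and> (\<forall>k<n. \<forall>i<n. N k i = of_real \<nu> * \<epsilon> k * cnj (\<epsilon> i))"
proof -
  have nu: "\<nu> > 0"
    using n n_nu by (metis of_nat_0_less_iff zero_less_mult_pos zero_less_one)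
  define S where "S i = (\<Sum>l<n. (cmod (of_real \<nu> * N l i - N 0 i * N l 0))\<^sup>2)" for i
  have first_row: "N 0 i * N i 0 = of_real ((cmod (N 0 i))\<^sup>2)" if "i < n" for i
    using herm[OF n that] by (simp add: complex_norm_square del: of_real_power)
  have S_eq: "S i = \<nu> * (\<nu>\<^sup>2 - (cmod (N 0 i))\<^sup>2)" if i: "i < n" for i
  proof -
    have "of_real (S i) = (\<Sum>l<n. of_real (\<nu>\<^sup>2) * (N i l * N l i)
        - of_real \<nu> * N i 0 * (N 0 l * N l i) - of_real \<nu> * N 0 i * (N i l * N l 0)
        + N 0 i * N i 0 * (N 0 l * N l 0))"
      unfolding S_def of_real_sum
    proof (rule sum.cong [OF refl])
      fix l assume "l \<in> {..<n}"
      then have "cnj (N l i) = N i l" "cnj (N l 0) = N 0 l" "cnj (N 0 i) = N i 0"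
        using herm n i by auto
      then show "of_real ((cmod (of_real \<nu> * N l i - N 0 i * N l 0))\<^sup>2) = of_real (\<nu>\<^sup>2) * (N i l * N l i)
          - of_real \<nu> * N i 0 * (N 0 l * N l i) - of_real \<nu> * N 0 i * (N i l * N l 0)
          + N 0 i * N i 0 * (N 0 l * N l 0)"
        unfolding complex_norm_square by (simp add: algebra_simps power2_eq_square)
    qed
    also have "\<dots> = of_real (\<nu>\<^sup>2) * N i i - of_real \<nu> * N i 0 * N 0 i
        - of_real \<nu> * N 0 i * N i 0 + N 0 i * N i 0 * N 0 0"
      by (simp add: sum.distrib sum_subtractf idem n i flip: sum_distrib_left)
    also have "\<dots> = of_real (\<nu> * (\<nu>\<^sup>2 - (cmod (N 0 i))\<^sup>2))"
      using first_row[OF i] diag[OF i] diag[OF n]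
      by (simp add: algebra_simps power2_eq_square)
    finally show ?thesis
      by (simp only: of_real_eq_iff)
  qed
  have gap_nonneg: "\<nu>\<^sup>2 - (cmod (N 0 i))\<^sup>2 \<ge> 0" if "i < n" for i
  proof -
    have "S i \<ge> 0"
      unfolding S_def by (intro sum_nonneg) auto
    then show ?thesis
      using S_eq[OF that] nu by (simp add: zero_le_mult_iff)
  qed
  have "of_real (\<Sum>i<n. (cmod (N 0 i))\<^sup>2) = (\<Sum>i<n. N 0 i * N i 0)"
    using first_row by simp
  also have "\<dots> = of_real \<nu>"
    using idem[OF n n] diag[OF n] by simp
  finally have "(\<Sum>i<n. \<nu>\<^sup>2 - (cmod (N 0 i))\<^sup>2) = 0"
    using n_nu by (simp only: of_real_eq_iff) (simp add: sum_subtractf power2_eq_square algebra_simps)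
  then have gap: "(cmod (N 0 i))\<^sup>2 = \<nu>\<^sup>2" if "i < n" for i
    using sum_nonneg_eq_0_iff[of "{..<n}" "\<lambda>i. \<nu>\<^sup>2 - (cmod (N 0 i))\<^sup>2"] gap_nonneg that by auto
  have rank_one: "of_real \<nu> * N l i = N 0 i * N l 0" if "l < n" "i < n" for l i
  proof -
    have "S i = 0"
      using S_eq gap \<open>i < n\<close> by simp
    then show ?thesis
      using sum_nonneg_eq_0_iff[of "{..<n}" "\<lambda>l. (cmod (of_real \<nu> * N l i - N 0 i * N l 0))\<^sup>2"] that
      unfolding S_def by simp
  qed
  show ?thesis
  proof (intro exI [of _ "\<lambda>k. N k 0 / of_real \<nu>"] conjI allI impI)
    fix k assume "k < n"
    have "cmod (N k 0) = \<nu>"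
      using gap[OF \<open>k < n\<close>] herm[OF \<open>k < n\<close> n] nu
      by (metis complex_mod_cnj norm_ge_zero power2_eq_iff_nonneg order.strict_implies_order)
    then show "cmod (N k 0 / of_real \<nu>) = 1"
      using nu by (simp add: norm_divide)
  next
    fix k i assume "k < n" "i < n"
    then show "N k i = of_real \<nu> * (N k 0 / of_real \<nu>) * cnj (N i 0 / of_real \<nu>)"
      using rank_one[of k i] herm[OF \<open>i < n\<close> n] nu by (simp add: field_simps)
  qed
qed

lemma parallel_if_norm_braket_eq_1:
  assumes "norm u = 1" and "norm v = 1" and "cmod (braket u v) = 1"
  shows "v = braket u v *s u"
proof -
  define c where "c = braket u v"
  have "cnj c * c = 1"
    using assms(3) complex_norm_square [of c] by (simp add: c_def mult.commute)
  have "braket (v - c *s u) (v - c *s u)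
      = braket v v - c * braket v u - cnj c * braket u v + cnj c * c * braket u u"
    by (simp add: algebra_simps)
  also have "\<dots> = 0"
    using assms(1,2) \<open>cnj c * c = 1\<close>
    by (simp add: braket_self c_def cnj_braket [of u v, symmetric] mult.commute)
  finally have "v - c *s u = 0"
    by (simp only: braket_self_eq_0_iff)
  then show ?thesis
    by (simp add: c_def)
qed

locale werner_decomposition =
  fixes d :: nat and t :: real and w :: "nat \<Rightarrow> real" and x y :: "nat \<Rightarrow> complex^'n::finite"
  assumes d_def: "d = CARD('n)" and d_ge_2: "d \<ge> 2"
    and t_lower: "- 1 / (real d ^ 2 - 1) \<le> t" and t_upper: "t \<le> 1 / (real d + 1)"
    and t_nonzero: "t \<noteq> 0"
    and w_nonneg: "\<forall>i<d^2. w i \<ge> 0"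
    and x_unit: "\<And>i. i < d^2 \<Longrightarrow> norm (x i) = 1" and y_unit: "\<And>i. i < d^2 \<Longrightarrow> norm (y i) = 1"
    and decomp: "(\<Sum>i<d^2. w i *\<^sub>R kron (outer (x i)) (outer (y i)))
                 = (t / real d) *\<^sub>R swap_op + ((1 - t) / real d ^ 2) *\<^sub>R mat 1"
begin

definition A :: real where "A = t / real d"

definition B :: real where "B = (1 - t) / real d ^ 2"

lemma d_pos: "real d > 0"
  using d_ge_2 by simp

lemma A_mult_d: "A * real d = t"
  using d_pos by (simp add: A_def)

lemma B_mult_d2: "B * (real d)\<^sup>2 = 1 - t"
  using d_pos by (simp add: B_def)

lemma t_lower_cleared: "t * ((real d)\<^sup>2 - 1) \<ge> -1"
proof -
  have "(real d)\<^sup>2 - 1 > 0"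
  proof -
    have "(real d)\<^sup>2 \<ge> 2\<^sup>2"
      using d_ge_2 by (intro power_mono) auto
    then show ?thesis
      by simp
  qed
  then have "- 1 / ((real d)\<^sup>2 - 1) * ((real d)\<^sup>2 - 1) \<le> t * ((real d)\<^sup>2 - 1)"
    using t_lower by (intro mult_right_mono) auto
  then show ?thesis
    using \<open>(real d)\<^sup>2 - 1 > 0\<close> by simp
qed

lemma t_upper_cleared: "t * (real d + 1) \<le> 1"
  using t_upper d_pos by (simp add: le_divide_eq)

lemma A_le_B: "A \<le> B"
proof -
  have "B - A = (1 - t * (real d + 1)) / (real d)\<^sup>2"
    using d_pos by (simp add: A_def B_def field_simps power2_eq_square)
  moreover have "(1 - t * (real d + 1)) / (real d)\<^sup>2 \<ge> 0"
    using t_upper_cleared by simp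
  ultimately show ?thesis
    by linarith
qed

lemma minus_A_less_B: "- A < B"
proof -
  have "1 + t * (real d - 1) > 0"
  proof (cases "t \<ge> 0")
    case True
    moreover have "real d - 1 \<ge> 0"
      using d_ge_2 by simp
    ultimately show ?thesis
      by (simp add: add_pos_nonneg)
  next
    case False
    have "real d - 1 < (real d)\<^sup>2 - 1"
      using d_ge_2 by (simp add: power2_eq_square)
    then have "t * (real d - 1) > t * ((real d)\<^sup>2 - 1)"
      using False by simp
    then show ?thesis
      using t_lower_cleared by linarith
  qed
  moreover have "B + A = (1 + t * (real d - 1)) / (real d)\<^sup>2"
    using d_pos by (simp add: A_def B_def field_simps power2_eq_square)
  ultimately have "B + A > 0"
    using d_pos by simp
  then show ?thesis
    by linarith
qed

lemma B_pos: "B > 0"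
  using A_le_B minus_A_less_B by linarith

lemma B_plus_t_nonneg: "B + t \<ge> 0"
proof -
  have "B + t = (1 + t * ((real d)\<^sup>2 - 1)) / (real d)\<^sup>2"
    using d_pos by (simp add: B_def field_simps)
  then show ?thesis
    using t_lower_cleared by simp
qed

lemma card_pairs: "CARD('n \<times> 'n) = d^2"
  by (simp add: d_def power2_eq_square)

lemma product_frame_operator:
  "(\<Sum>k<d^2. (of_real (w k) * braket (tensor (x k) (y k)) u) *s tensor (x k) (y k))
    = of_real A *s (swap_op *v u) + of_real B *s u"
proof -
  have "(\<Sum>k<d^2. (of_real (w k) * braket (tensor (x k) (y k)) u) *s tensor (x k) (y k))
      = (\<Sum>k<d^2. w k *\<^sub>R outer (tensor (x k) (y k))) *v u"
    by (rule frame_operator_apply [symmetric])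
  also have "\<dots> = (A *\<^sub>R swap_op + B *\<^sub>R mat 1) *v u"
    using decomp by (simp add: kron_outer A_def B_def)
  finally show ?thesis
    by (simp add: matrix_vector_mult_add_rdistrib scaleR_matrix_vector_mult)
qed

lemma conj_product_frame_operator:
  "(\<Sum>k<d^2. (of_real (w k) * braket (tensor (x k) (vcnj (y k))) u) *s tensor (x k) (vcnj (y k)))
    = (of_real A * braket max_ent u) *s max_ent + of_real B *s u"
proof -
  have "(\<Sum>k<d^2. (of_real (w k) * braket (tensor (x k) (vcnj (y k))) u) *s tensor (x k) (vcnj (y k)))
      = (\<Sum>k<d^2. w k *\<^sub>R outer (tensor (x k) (vcnj (y k)))) *v u"
    by (rule frame_operator_apply [symmetric])
  also have "(\<Sum>k<d^2. w k *\<^sub>R outer (tensor (x k) (vcnj (y k)))) = A *\<^sub>R outer max_ent + B *\<^sub>R mat 1"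
    using arg_cong [OF decomp, of ptrans]
    by (simp add: ptrans_sum ptrans_add ptrans_scaleR kron_outer ptrans_outer_tensor ptrans_swap_op
        ptrans_mat_1 A_def B_def)
  finally show ?thesis
    by (simp add: matrix_vector_mult_add_rdistrib scaleR_matrix_vector_mult
        outer_apply)
qed

lemma braket_x_self: "i < d^2 \<Longrightarrow> braket (x i) (x i) = 1"
  by (simp add: braket_self x_unit)

lemma braket_y_self: "i < d^2 \<Longrightarrow> braket (y i) (y i) = 1"
  by (simp add: braket_self y_unit)

lemma product_saturation:
  shows product_saturation_diag:
      "i < d^2 \<Longrightarrow> w i * (B - A * (cmod (braket (x i) (y i)))\<^sup>2) = B\<^sup>2 - A\<^sup>2"
    and product_saturation_off_diag: "A < B \<Longrightarrow> i < d^2 \<Longrightarrow> k < d^2 \<Longrightarrow> k \<noteq> i \<Longrightarrow>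
      of_real B * (braket (x k) (x i) * braket (y k) (y i))
        = of_real A * (braket (x k) (y i) * braket (y k) (x i))"
proof -
  \<comment> \<open>Since U_SW is an involution, M inverts A U_SW + B I up to the factor B^2 - A^2.\<close>
  define M where "M u = of_real B *s u - of_real A *s (swap_op *v u)" for u :: "complex^('n \<times> 'n)"
  have inverse: "(\<Sum>k<d^2. (of_real (w k) * braket (tensor (x k) (y k)) (M u)) *s tensor (x k) (y k))
      = of_real (B\<^sup>2 - A\<^sup>2) *s u" for u
    unfolding product_frame_operator M_def by (simp add: vec_eq_iff swap_op_apply algebra_simps power2_eq_square)
  have selfadj: "braket (M u) u' = braket u (M u')" for u u'
    unfolding M_def by (simp add: braket_swap_op)
  have "B\<^sup>2 - A\<^sup>2 = (B - A) * (B + A)"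
    by (simp add: algebra_simps power2_eq_square)
  then have c_nonneg: "B\<^sup>2 - A\<^sup>2 \<ge> 0" and c_pos: "A < B \<Longrightarrow> B\<^sup>2 - A\<^sup>2 > 0"
    using A_le_B minus_A_less_B by simp_all
  note saturation = frame_inverse_saturation [OF card_pairs [symmetric] w_nonneg c_nonneg inverse selfadj]
  show "w i * (B - A * (cmod (braket (x i) (y i)))\<^sup>2) = B\<^sup>2 - A\<^sup>2" if "i < d^2" for i
  proof -
    have "of_real (w i * (B - A * (cmod (braket (x i) (y i)))\<^sup>2)) = (of_real (B\<^sup>2 - A\<^sup>2) :: complex)"
      using saturation(1) [OF that] that
      by (simp add: M_def braket_tensor braket_swap_op_tensor braket_x_self braket_y_self)
    then show ?thesis
      by (simp only: of_real_eq_iff)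
  qed
  show "of_real B * (braket (x k) (x i) * braket (y k) (y i))
      = of_real A * (braket (x k) (y i) * braket (y k) (x i))"
    if "A < B" "i < d^2" "k < d^2" "k \<noteq> i" for i k
    using saturation(2) [OF c_pos that(2-4)] that(1)
    by (simp add: M_def braket_tensor swap_op_tensor)
qed

lemma conj_product_saturation:
  shows conj_product_saturation_diag:
      "i < d^2 \<Longrightarrow> w i * (B + t - A * (cmod (braket (x i) (y i)))\<^sup>2) = B * (B + t)"
    and conj_product_saturation_off_diag: "0 < B + t \<Longrightarrow> i < d^2 \<Longrightarrow> k < d^2 \<Longrightarrow> k \<noteq> i \<Longrightarrow>
      of_real (B + t) * (braket (x k) (x i) * braket (y i) (y k))
        = of_real A * (braket (x k) (y k) * braket (y i) (x i))"
proof -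
  \<comment> \<open>M inverts A |Phi><Phi| + B I up to the factor B (B + t), because <Phi|Phi> = d and A d = t.\<close>
  define M where
    "M u = of_real (B + t) *s u - (of_real A * braket max_ent u) *s max_ent" for u :: "complex^('n \<times> 'n)"
  have max_ent_M: "braket max_ent (M u) = of_real B * braket max_ent u" for u
  proof -
    have "braket max_ent (M u) = (of_real (B + t) - of_real (A * real d)) * braket max_ent u"
      by (simp add: M_def braket_max_ent_self d_def algebra_simps)
    then show ?thesis
      by (simp add: A_mult_d)
  qed
  have inverse: "(\<Sum>k<d^2. (of_real (w k) * braket (tensor (x k) (vcnj (y k))) (M u)) *s tensor (x k) (vcnj (y k)))
      = of_real (B * (B + t)) *s u" for u
    unfolding conj_product_frame_operator max_ent_M by (simp add: M_def vec_eq_iff algebra_simps)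
  have selfadj: "braket (M u) u' = braket u (M u')" for u u'
    unfolding M_def by (simp add: cnj_braket mult_ac)
  have c_nonneg: "B * (B + t) \<ge> 0" and c_pos: "0 < B + t \<Longrightarrow> B * (B + t) > 0"
    using B_pos B_plus_t_nonneg by simp_all
  note saturation = frame_inverse_saturation [OF card_pairs [symmetric] w_nonneg c_nonneg inverse selfadj]
  show "w i * (B + t - A * (cmod (braket (x i) (y i)))\<^sup>2) = B * (B + t)" if "i < d^2" for i
  proof -
    have "braket (y i) (x i) * braket (x i) (y i) = of_real ((cmod (braket (x i) (y i)))\<^sup>2)"
      by (simp add: complex_norm_square cnj_braket del: of_real_power)
    then have "of_real (w i * (B + t - A * (cmod (braket (x i) (y i)))\<^sup>2)) = (of_real (B * (B + t)) :: complex)"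
      using saturation(1) [OF that] that
      by (simp add: M_def braket_tensor braket_vcnj braket_max_ent_tensor braket_tensor_max_ent
          braket_x_self braket_y_self mult_ac)
    then show ?thesis
      by (simp only: of_real_eq_iff)
  qed
  show "of_real (B + t) * (braket (x k) (x i) * braket (y i) (y k))
      = of_real A * (braket (x k) (y k) * braket (y i) (x i))"
    if "0 < B + t" "i < d^2" "k < d^2" "k \<noteq> i" for i k
    using saturation(2) [OF c_pos that(2-4)] that(1)
    by (simp add: M_def braket_tensor braket_vcnj braket_max_ent_tensor braket_tensor_max_ent
        algebra_simps)
qed

lemma weights_uniform: "i < d^2 \<Longrightarrow> w i = 1 / (real d)\<^sup>2"
proof -
  assume i: "i < d^2"
  define g where "g = (cmod (braket (x i) (y i)))\<^sup>2"
  have "w i * t = w i * (B + t - A * g) - w i * (B - A * g)"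
    by (simp add: algebra_simps)
  also have "\<dots> = B * t + A\<^sup>2"
    using product_saturation_diag [OF i] conj_product_saturation_diag [OF i]
    by (simp add: g_def algebra_simps power2_eq_square)
  finally have "w i = B + A\<^sup>2 / t"
    using t_nonzero by (simp add: field_simps)
  then show ?thesis
    using t_nonzero d_pos by (simp add: A_def B_def field_simps power2_eq_square)
qed

lemma diagonal_overlap: "i < d^2 \<Longrightarrow> (cmod (braket (x i) (y i)))\<^sup>2 = real d * (B + t)"
proof -
  assume i: "i < d^2"
  define g where "g = (cmod (braket (x i) (y i)))\<^sup>2"
  have "(B + t - A * g) / (real d)\<^sup>2 = B * (B + t)"
    using conj_product_saturation_diag [OF i] weights_uniform [OF i] by (simp add: g_def)
  then have "B + t - A * g = B * (B + t) * (real d)\<^sup>2"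
    using d_pos by (simp add: divide_eq_eq)
  also have "\<dots> = (1 - t) * (B + t)"
    by (simp only: B_mult_d2 [symmetric]) (simp add: algebra_simps)
  finally have "A * g = t * (B + t)"
    by (simp add: algebra_simps)
  also have "\<dots> = A * (real d * (B + t))"
    by (metis A_mult_d mult.assoc)
  moreover have "A \<noteq> 0"
    using t_nonzero d_pos by (simp add: A_def)
  ultimately show ?thesis
    by (simp add: g_def)
qed

lemma diagonal_overlap_value: "real d * (B + t) = (t * (real d ^ 2 - 1) + 1) / real d"
  using d_pos by (simp add: B_def field_simps power2_eq_square)

lemma werner_entry:
  "(\<Sum>i<d^2. of_real (w i) * (x i $ a * cnj (x i $ c) * y i $ b * cnj (y i $ e)))
    = of_real A * (if a = e \<and> b = c then 1 else 0) + of_real B * (if a = c \<and> b = e then 1 else 0)"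
  using arg_cong [OF decomp, of "\<lambda>R. R $ (a, b) $ (c, e)"]
  by (simp add: kron_def outer_def swap_op_def mat_def A_def B_def mult_ac
      scaleR_conv_of_real [where 'a = complex])

lemma partial_trace_second:
  "(\<Sum>i<d^2. of_real (w i) * braket (y i) (N *v y i) * (x i $ a * cnj (x i $ c)))
    = of_real A * N $ a $ c + of_real B * (if a = c then trace N else 0)"
proof -
  have "braket v (N *v v) = (\<Sum>b\<in>UNIV. \<Sum>e\<in>UNIV. N $ b $ e * (cnj (v $ b) * v $ e))" for v
    by (simp add: braket_def matrix_vector_mult_def sum_distrib_left mult_ac)
  then have "(\<Sum>i<d^2. of_real (w i) * braket (y i) (N *v y i) * (x i $ a * cnj (x i $ c)))
      = (\<Sum>i<d^2. \<Sum>b\<in>UNIV. \<Sum>e\<in>UNIV.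
          N $ b $ e * (of_real (w i) * (x i $ a * cnj (x i $ c) * y i $ e * cnj (y i $ b))))"
    by (simp add: sum_distrib_left sum_distrib_right mult_ac)
  also have "\<dots> = (\<Sum>b\<in>UNIV. \<Sum>e\<in>UNIV. \<Sum>i<d^2.
          N $ b $ e * (of_real (w i) * (x i $ a * cnj (x i $ c) * y i $ e * cnj (y i $ b))))"
    by (subst sum.swap, rule sum.cong [OF refl], rule sum.swap)
  also have "\<dots> = (\<Sum>b\<in>UNIV. \<Sum>e\<in>UNIV. N $ b $ e *
          (of_real A * (if a = b \<and> e = c then 1 else 0) + of_real B * (if a = c \<and> e = b then 1 else 0)))"
    by (simp only: werner_entry flip: sum_distrib_left)
  also have "\<dots> = (\<Sum>b\<in>UNIV. \<Sum>e\<in>UNIV. (if e = c then (if a = b then of_real A * N $ b $ e else 0) else 0)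
          + (if e = b then (if a = c then of_real B * N $ b $ e else 0) else 0))"
    by (intro sum.cong refl) (auto simp: algebra_simps)
  also have "\<dots> = of_real A * N $ a $ c + of_real B * (if a = c then trace N else 0)"
    by (simp add: sum.distrib trace_def sum_distrib_left)
  finally show ?thesis .
qed

lemma sum_eq_scaled_weighted_sum:
  fixes f :: "nat \<Rightarrow> complex"
  shows "(\<Sum>i<d^2. f i) = (of_nat d)\<^sup>2 * (\<Sum>i<d^2. of_real (w i) * f i)"
proof -
  have weight: "(of_nat d)\<^sup>2 * of_real (w i) = (1 :: complex)" if "i < d^2" for i
  proof -
    have "w i * (real d)\<^sup>2 = 1"
      using weights_uniform [OF that] d_pos by simp
    then show ?thesis
      by (metis mult.commute of_real_1 of_real_mult of_real_of_nat_eq of_real_power)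
  qed
  have "f i = (of_nat d)\<^sup>2 * (of_real (w i) * f i)" if "i < d^2" for i
    by (simp add: mult.assoc [symmetric] weight [OF that])
  then have "(\<Sum>i<d^2. f i) = (\<Sum>i<d^2. (of_nat d)\<^sup>2 * (of_real (w i) * f i))"
    by (intro sum.cong) simp_all
  then show ?thesis
    by (simp add: sum_distrib_left)
qed

lemma sum_outer_first: "(\<Sum>i<d^2. outer (x i)) = real d *\<^sub>R mat 1"
proof -
  have "(real d)\<^sup>2 * (A + B * real d) = real d"
    using A_mult_d B_mult_d2 d_pos by (simp add: field_simps power2_eq_square)
  then have scale: "(of_nat d)\<^sup>2 * (of_real A + of_real B * of_nat d) = (of_nat d :: complex)"
    using arg_cong [where f = complex_of_real] by (metis of_real_add of_real_mult of_real_of_nat_eq of_real_power)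
  have "(\<Sum>i<d^2. x i $ a * cnj (x i $ c)) = of_nat d * (if a = c then 1 else 0)" for a c
  proof -
    have "(\<Sum>i<d^2. x i $ a * cnj (x i $ c))
        = (of_nat d)\<^sup>2 * (\<Sum>i<d^2. of_real (w i) * braket (y i) (mat 1 *v y i) * (x i $ a * cnj (x i $ c)))"
      by (subst sum_eq_scaled_weighted_sum) (intro arg_cong [where f = "(*) _"] sum.cong; simp add: braket_y_self)
    also have "\<dots> = (of_nat d)\<^sup>2 * (of_real A + of_real B * of_nat d) * (if a = c then 1 else 0)"
      unfolding partial_trace_second trace_I by (simp add: mat_def flip: d_def)
    finally show ?thesis
      unfolding scale .
  qed
  then show ?thesis
    by (simp add: vec_eq_iff outer_def mat_def scaleR_conv_of_real [where 'a = complex])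
qed

lemma inf_complete_first: "inf_complete (d^2) x"
  unfolding inf_complete_def
proof
  fix M :: "complex^'n^'n"
  \<comment> \<open>Invert N |-> A N + B tr(N) I, the partial trace against the y i: N = (M - kappa I)/A.\<close>
  define \<kappa> where "\<kappa> = of_real (B * real d) * trace M"
  define N where "N = (\<chi> a c. (M $ a $ c - (if a = c then \<kappa> else 0)) / of_real A)"
  have A_nonzero: "(of_real A :: complex) \<noteq> 0"
    using t_nonzero d_pos by (simp add: A_def)
  have "1 - real d * (B * real d) = t"
    using B_mult_d2 by (simp add: power2_eq_square algebra_simps)
  then have real_id: "A * (B * real d) = B * (1 - real d * (B * real d))"
    by (metis A_mult_d mult.commute mult.left_commute)
  have "of_real A * \<kappa> = of_real (A * (B * real d)) * trace M"
    by (simp add: \<kappa>_def)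
  also have "\<dots> = of_real (B * (1 - real d * (B * real d))) * trace M"
    by (simp only: real_id)
  also have "\<dots> = of_real B * (trace M - of_nat d * \<kappa>)"
    by (simp add: \<kappa>_def algebra_simps)
  finally have "of_real A * \<kappa> = of_real B * (trace M - of_nat d * \<kappa>)" .
  then have \<kappa>_eq: "of_real B * (trace N) = \<kappa>"
    using A_nonzero
    by (simp add: N_def trace_def sum_subtractf field_simps flip: sum_divide_distrib d_def)
  show "\<exists>c. M = (\<Sum>i<d^2. \<chi> a b. c i * outer (x i) $ a $ b)"
  proof (intro exI [of _ "\<lambda>i. of_real (w i) * braket (y i) (N *v y i)"])
    have "(\<Sum>i<d^2. of_real (w i) * braket (y i) (N *v y i) * (x i $ a * cnj (x i $ c))) = M $ a $ c"
      for a c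
      unfolding partial_trace_second using A_nonzero \<kappa>_eq by (simp add: N_def)
    then show "M = (\<Sum>i<d^2. \<chi> a b. of_real (w i) * braket (y i) (N *v y i) * outer (x i) $ a $ b)"
      by (simp add: vec_eq_iff outer_def)
  qed
qed

lemma swap_sides: "werner_decomposition d t w y x"
proof -
  have "(\<Sum>i<d^2. w i *\<^sub>R kron (outer (y i)) (outer (x i)))
      = (t / real d) *\<^sub>R swap_op + ((1 - t) / real d ^ 2) *\<^sub>R mat 1"
  proof (unfold vec_eq_iff, intro allI)
    fix p q :: "'n \<times> 'n"
    show "(\<Sum>i<d^2. w i *\<^sub>R kron (outer (y i)) (outer (x i))) $ p $ q
        = ((t / real d) *\<^sub>R swap_op + ((1 - t) / real d ^ 2) *\<^sub>R mat 1) $ p $ q"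
      using arg_cong [OF decomp, of "\<lambda>R. R $ prod.swap p $ prod.swap q"]
      by (cases p; cases q) (simp add: kron_def outer_def swap_op_def mat_def mult_ac conj_commute)
  qed
  then show ?thesis
    using d_def d_ge_2 t_lower t_upper t_nonzero w_nonneg x_unit y_unit by unfold_locales
qed

lemma sum_outer_second: "(\<Sum>i<d^2. outer (y i)) = real d *\<^sub>R mat 1"
  by (rule werner_decomposition.sum_outer_first [OF swap_sides])

lemma sum_overlaps_first: "(\<Sum>j<d^2. (cmod (braket (x j) v))\<^sup>2) = real d * (norm v)\<^sup>2"
proof -
  have "of_real (\<Sum>j<d^2. (cmod (braket (x j) v))\<^sup>2) = braket v (\<Sum>j<d^2. braket (x j) v *s x j)"
    by (simp add: braket_sum_right complex_norm_square cnj_braket mult.commute del: of_real_power)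
  also have "\<dots> = braket v ((\<Sum>j<d^2. outer (x j)) *v v)"
    using frame_operator_apply [where w = "\<lambda>_. 1" and v = x and K = "{..<d^2}" and u = v] by simp
  also have "\<dots> = of_real (real d * (norm v)\<^sup>2)"
    using sum_outer_first by (simp add: scaleR_matrix_vector_mult braket_self)
  finally show ?thesis
    by (simp only: of_real_eq_iff)
qed

lemma tight_frame_first: "tight_frame (d^2) x"
  unfolding tight_frame_def using sum_outer_first by (intro exI [of _ "real d"]) simp

lemma tight_frame_second: "tight_frame (d^2) y"
  unfolding tight_frame_def using sum_outer_second by (intro exI [of _ "real d"]) simp

lemma inf_complete_second: "inf_complete (d^2) y"
  by (rule werner_decomposition.inf_complete_first [OF swap_sides])

definition gram :: "nat \<Rightarrow> nat \<Rightarrow> complex" where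
  "gram k l = braket (x k) (x l) * braket (y l) (y k)"

lemma cnj_gram: "cnj (gram k l) = gram l k"
  by (simp add: gram_def cnj_braket mult.commute)

lemma gram_diag: "k < d^2 \<Longrightarrow> gram k k = 1"
  by (simp add: gram_def braket_x_self braket_y_self)

lemma gram_square:
  "(\<Sum>l<d^2. of_real (w l) * (gram k l * gram l i))
    = of_real A * (braket (x k) (y k) * braket (y i) (x i)) + of_real B * gram k i"
  using arg_cong [OF conj_product_frame_operator [of "tensor (x i) (vcnj (y i))"],
      of "braket (tensor (x k) (vcnj (y k)))"]
  by (simp add: braket_sum_right braket_tensor braket_vcnj braket_max_ent_tensor braket_tensor_max_ent
      gram_def mult_ac)

(*
  At the boundary every x_i (x) conj y_i is orthogonal to Phi, so the Gram matrix satisfies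
  G^2 = (1 - t) G and I - G/(1 - t) is a projection with constant diagonal 1/d^2.
*)
lemma gram_rank_one_at_boundary:
  assumes boundary: "B + t = 0"
  shows "\<exists>\<epsilon>. (\<forall>k<d^2. cmod (\<epsilon> k) = 1)
    \<and> (\<forall>j<d^2. \<forall>i<d^2. j \<noteq> i \<longrightarrow> gram j i = of_real t * \<epsilon> j * cnj (\<epsilon> i))"
proof -
  define c where "c = 1 - t"
  define N where "N k l = (if k = l then 1 else 0) - gram k l / of_real c" for k l
  have "c = B * (real d)\<^sup>2"
    by (simp add: c_def B_mult_d2)
  moreover have "B = - t"
    using boundary by linarith
  ultimately have c_eq: "c = - t * (real d)\<^sup>2"
    by simp
  have c_nonzero: "(of_real c :: complex) \<noteq> 0"
    using c_eq t_nonzero d_pos by simp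
  have orthogonal: "braket (x i) (y i) = 0" if "i < d^2" for i
    using diagonal_overlap [OF that] boundary by simp
  have gram_idem: "(\<Sum>l<d^2. gram k l * gram l i) = of_real c * gram k i" if "k < d^2" for k i
  proof -
    have "(\<Sum>l<d^2. gram k l * gram l i) = (of_nat d)\<^sup>2 * (of_real B * gram k i)"
      using sum_eq_scaled_weighted_sum [of "\<lambda>l. gram k l * gram l i"] gram_square [of k i]
        orthogonal [OF that] by simp
    also have "\<dots> = of_real (B * (real d)\<^sup>2) * gram k i"
      by simp
    finally show ?thesis
      by (simp only: B_mult_d2 c_def)
  qed
  have herm: "cnj (N k l) = N l k" for k l
    by (simp add: N_def cnj_gram)
  have gram_N: "(\<Sum>l<d^2. gram k l * N l i) = 0" if "k < d^2" "i < d^2" for k i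
  proof -
    have "gram k l * N l i = (if l = i then gram k l else 0) - gram k l * gram l i / of_real c" for l
      by (cases "l = i") (simp_all add: N_def right_diff_distrib)
    then show ?thesis
      using that c_nonzero by (simp add: sum_subtractf gram_idem flip: sum_divide_distrib)
  qed
  have idem: "(\<Sum>l<d^2. N k l * N l i) = N k i" if "k < d^2" "i < d^2" for k i
  proof -
    have "N k l * N l i = (if k = l then N l i else 0) - gram k l * N l i / of_real c" for l
      unfolding N_def [of k l] by (simp add: left_diff_distrib mult_if_delta)
    then show ?thesis
      using that by (simp add: sum_subtractf gram_N flip: sum_divide_distrib)
  qed
  have diag: "N k k = of_real (1 / (real d)\<^sup>2)" if "k < d^2" for k
  proof -
    have "1 - 1 / c = (c - 1) / c"
      using c_nonzero by (simp add: diff_divide_distrib)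
    also have "(c - 1) / c = - t / c"
      by (simp add: c_def)
    also have "\<dots> = 1 / (real d)\<^sup>2"
      using c_eq t_nonzero d_pos by simp
    finally have "1 - 1 / c = 1 / (real d)\<^sup>2" .
    moreover have "N k k = of_real (1 - 1 / c)"
      by (simp add: N_def gram_diag that)
    ultimately show ?thesis
      by simp
  qed
  have n_pos: "0 < d^2" and n_nu: "real (d^2) * (1 / (real d)\<^sup>2) = 1"
    using d_pos by simp_all
  obtain \<epsilon> where unit: "\<forall>k<d^2. cmod (\<epsilon> k) = 1"
    and rank_one: "\<forall>k<d^2. \<forall>i<d^2. N k i = of_real (1 / (real d)\<^sup>2) * \<epsilon> k * cnj (\<epsilon> i)"
    using constant_diagonal_projection_rank_one [of "d^2" "1 / (real d)\<^sup>2" N, OF n_pos n_nu herm idem diag]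
    by blast
  show ?thesis
  proof (intro exI [of _ \<epsilon>] conjI unit allI impI)
    fix j i assume "j < d^2" "i < d^2" "j \<noteq> i"
    have "gram j i = - of_real c * N j i"
      using \<open>j \<noteq> i\<close> c_nonzero by (simp add: N_def)
    also have "\<dots> = of_real (- c / (real d)\<^sup>2) * \<epsilon> j * cnj (\<epsilon> i)"
      by (simp add: rank_one \<open>j < d^2\<close> \<open>i < d^2\<close>)
    also have "- c / (real d)\<^sup>2 = t"
      using c_eq d_pos by simp
    finally show "gram j i = of_real t * \<epsilon> j * cnj (\<epsilon> i)" .
  qed
qed

lemma phase_alignment:
  "\<exists>\<beta>. (\<forall>i<d^2. cmod (\<beta> i) = 1)
     \<and> (\<forall>i<d^2. \<beta> i * braket (x i) (y i) = of_real (sqrt (real d * (B + t))))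
     \<and> (\<forall>i<d^2. \<forall>j<d^2. i \<noteq> j \<longrightarrow> cnj (\<beta> i) * \<beta> j * gram j i = of_real t)"
proof (cases "B + t = 0")
  case True
  obtain \<epsilon> where unit: "\<forall>k<d^2. cmod (\<epsilon> k) = 1"
    and rank_one: "\<forall>j<d^2. \<forall>i<d^2. j \<noteq> i \<longrightarrow> gram j i = of_real t * \<epsilon> j * cnj (\<epsilon> i)"
    using gram_rank_one_at_boundary [OF True] by blast
  have unimodular: "\<epsilon> k * cnj (\<epsilon> k) = 1" if "k < d^2" for k
    using unit that complex_norm_square [of "\<epsilon> k"] by simp
  show ?thesis
  proof (intro exI [of _ "\<lambda>k. cnj (\<epsilon> k)"] conjI allI impI)
    fix i assume "i < d^2"
    show "cmod (cnj (\<epsilon> i)) = 1"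
      using unit \<open>i < d^2\<close> by simp
    show "cnj (\<epsilon> i) * braket (x i) (y i) = of_real (sqrt (real d * (B + t)))"
      using diagonal_overlap [OF \<open>i < d^2\<close>] True by simp
    fix j assume "j < d^2" "i \<noteq> j"
    then have "cnj (cnj (\<epsilon> i)) * cnj (\<epsilon> j) * gram j i
        = of_real t * (\<epsilon> i * cnj (\<epsilon> i)) * (\<epsilon> j * cnj (\<epsilon> j))"
      using rank_one \<open>i < d^2\<close> by (simp add: mult_ac)
    then show "cnj (cnj (\<epsilon> i)) * cnj (\<epsilon> j) * gram j i = of_real t"
      using unimodular \<open>i < d^2\<close> \<open>j < d^2\<close> by simp
  qed
next
  case False
  then have pos: "B + t > 0"
    using B_plus_t_nonneg by simp
  define r where "r = sqrt (real d * (B + t))"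
  have r_pos: "r > 0"
    using pos d_pos by (simp add: r_def)
  have norm_overlap: "cmod (braket (x i) (y i)) = r" if "i < d^2" for i
    using real_sqrt_unique [OF diagonal_overlap [OF that] norm_ge_zero] by (simp add: r_def)
  define \<beta> where "\<beta> i = cnj (braket (x i) (y i)) / of_real r" for i
  have aligned: "\<beta> i * braket (x i) (y i) = of_real r" if "i < d^2" for i
  proof -
    have "cnj (braket (x i) (y i)) * braket (x i) (y i) = of_real (r * r)"
      using complex_norm_square [of "braket (x i) (y i)"] norm_overlap [OF that]
      by (simp add: mult.commute power2_eq_square)
    then show ?thesis
      using r_pos by (simp add: \<beta>_def)
  qed
  show ?thesis
  proof (intro exI [of _ \<beta>] conjI allI impI)
    fix i assume "i < d^2"
    show "cmod (\<beta> i) = 1"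
      using norm_overlap [OF \<open>i < d^2\<close>] r_pos by (simp add: \<beta>_def norm_divide)
    show "\<beta> i * braket (x i) (y i) = of_real (sqrt (real d * (B + t)))"
      using aligned [OF \<open>i < d^2\<close>] by (simp add: r_def)
    fix j assume "j < d^2" "i \<noteq> j"
    have "of_real (B + t) * (cnj (\<beta> i) * \<beta> j * gram j i)
        = of_real A * (\<beta> j * braket (x j) (y j)) * cnj (\<beta> i * braket (x i) (y i))"
      using conj_product_saturation_off_diag [OF pos \<open>i < d^2\<close> \<open>j < d^2\<close>] \<open>i \<noteq> j\<close>
      by (simp add: gram_def cnj_braket mult_ac)
    also have "\<dots> = of_real (A * (r * r))"
      by (simp add: aligned \<open>i < d^2\<close> \<open>j < d^2\<close>)
    also have "A * (r * r) = (B + t) * t"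
      using pos d_pos A_mult_d by (simp add: r_def)
    finally show "cnj (\<beta> i) * \<beta> j * gram j i = of_real t"
      using pos by (simp del: of_real_add)
  qed
qed

lemma norm_gram: "i < d^2 \<Longrightarrow> j < d^2 \<Longrightarrow> i \<noteq> j \<Longrightarrow> cmod (gram j i) = \<bar>t\<bar>"
  using phase_alignment by (metis (no_types, lifting) complex_mod_cnj mult_cancel_right1 norm_mult norm_of_real)

lemma cross_overlap_product:
  assumes k: "k < d^2" and i: "i < d^2" and "k \<noteq> i"
  shows "cmod (braket (x k) (y i)) * cmod (braket (x i) (y k)) = (1 - t) / real d"
proof (cases "A < B")
  case True
  have "of_real B * (braket (x k) (x i) * braket (y k) (y i))
      = of_real A * (braket (x k) (y i) * braket (y k) (x i))"
    by (rule product_saturation_off_diag [OF True i k \<open>k \<noteq> i\<close>])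
  then have "cmod (of_real B * (braket (x k) (x i) * braket (y k) (y i)))
      = cmod (of_real A * (braket (x k) (y i) * braket (y k) (x i)))"
    by simp
  then have "B * cmod (gram k i) = \<bar>A\<bar> * (cmod (braket (x k) (y i)) * cmod (braket (x i) (y k)))"
    using B_pos
    by (simp add: gram_def norm_mult norm_braket_swap [of "y k" "y i"] norm_braket_swap [of "y k" "x i"])
  moreover have "cmod (gram k i) = \<bar>A\<bar> * real d"
  proof -
    have "\<bar>t\<bar> = \<bar>A * real d\<bar>"
      by (simp add: A_mult_d)
    then show ?thesis
      using norm_gram [OF i k] \<open>k \<noteq> i\<close> by (simp add: abs_mult)
  qed
  moreover have "\<bar>A\<bar> > 0"
    using t_nonzero d_pos by (simp add: A_def)
  ultimately have "cmod (braket (x k) (y i)) * cmod (braket (x i) (y k)) = B * real d"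
    by (simp add: algebra_simps)
  also have "\<dots> = (1 - t) / real d"
    using d_pos by (simp add: B_def power2_eq_square)
  finally show ?thesis .
next
  case False
  \<comment> \<open>Then t = 1/(d + 1) and every y j is a multiple of x j.\<close>
  then have "A = B"
    using A_le_B by simp
  then have td: "t * real d = 1 - t"
    using A_mult_d B_mult_d2 by (metis mult.assoc power2_eq_square)
  have unit_overlap: "cmod (braket (x j) (y j)) = 1" if "j < d^2" for j
  proof -
    have "real d * (B + t) = 1"
      using \<open>A = B\<close> A_mult_d td by (simp add: algebra_simps)
    then have "(cmod (braket (x j) (y j)))\<^sup>2 = 1\<^sup>2"
      using diagonal_overlap [OF that] by simp
    then show ?thesis
      by (metis norm_ge_zero power2_eq_iff_nonneg zero_le_one)
  qed
  have parallel: "y j = braket (x j) (y j) *s x j" if "j < d^2" for j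
    using parallel_if_norm_braket_eq_1 x_unit y_unit unit_overlap that by blast
  have m: "cmod (braket (x k) (y i)) = cmod (braket (x k) (x i))"
    using arg_cong [OF parallel [OF i], of "\<lambda>v. cmod (braket (x k) v)"] unit_overlap [OF i]
    by (simp add: norm_mult)
  have m': "cmod (braket (x i) (y k)) = cmod (braket (x k) (x i))"
    using arg_cong [OF parallel [OF k], of "\<lambda>v. cmod (braket (x i) v)"] unit_overlap [OF k]
    by (simp add: norm_mult norm_braket_swap [of "x i"])
  have "cmod (braket (y i) (y k)) = cmod (braket (x k) (x i))"
    using arg_cong2 [OF parallel [OF i] parallel [OF k], of "\<lambda>u v. cmod (braket u v)"]
      unit_overlap [OF i] unit_overlap [OF k]
    by (simp add: norm_mult norm_braket_swap [of "x i"])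
  then have "cmod (braket (x k) (y i)) * cmod (braket (x i) (y k)) = cmod (gram k i)"
    by (simp add: m m' gram_def norm_mult)
  also have "\<dots> = t"
  proof -
    have "0 < t * (real d + 1)"
      using td by (simp add: algebra_simps)
    then have "t > 0"
      using d_pos by (simp add: zero_less_mult_iff)
    then show ?thesis
      using norm_gram [OF i k] \<open>k \<noteq> i\<close> by simp
  qed
  also have "t = (1 - t) / real d"
    using td d_pos by (simp add: field_simps)
  finally show ?thesis .
qed

lemma cross_overlap:
  assumes "k < d^2" and i: "i < d^2" and "k \<noteq> i"
  shows "(cmod (braket (x k) (y i)))\<^sup>2 = (1 - t) / real d"
proof -
  define f where "f j = cmod (braket (x j) (y i))" for j
  define g where "g j = cmod (braket (x i) (y j))" for j
  have "(\<Sum>j<d^2. (f j)\<^sup>2) = real d"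
    using sum_overlaps_first [of "y i"] y_unit i by (simp add: f_def)
  moreover have "(\<Sum>j<d^2. (g j)\<^sup>2) = real d"
    using werner_decomposition.sum_overlaps_first [OF swap_sides, of "x i"] x_unit i
    by (simp add: g_def norm_braket_swap [of "x i"])
  moreover have "(\<Sum>j<d^2. f j * g j) = real d"
  proof -
    have "(\<Sum>j<d^2. f j * g j) = f i * g i + (\<Sum>j\<in>{..<d^2} - {i}. f j * g j)"
      using i by (simp add: sum.remove)
    also have "(\<Sum>j\<in>{..<d^2} - {i}. f j * g j) = (\<Sum>j\<in>{..<d^2} - {i}. (1 - t) / real d)"
      by (intro sum.cong) (simp_all add: f_def g_def cross_overlap_product i)
    also have "f i * g i = real d * (B + t)"
      using diagonal_overlap [OF i] by (simp add: f_def g_def power2_eq_square)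
    also have "real d * (B + t) + (\<Sum>j\<in>{..<d^2} - {i}. (1 - t) / real d) = real d"
      using i d_pos B_mult_d2 by (simp add: of_nat_diff field_simps power2_eq_square)
    finally show ?thesis .
  qed
  ultimately have "f k = g k"
    using sum_products_eq_sum_squares_imp_eq [of "{..<d^2}" k] \<open>k < d^2\<close> by simp
  then show ?thesis
    using cross_overlap_product [OF assms] by (simp add: f_def g_def power2_eq_square)
qed

lemma phase_normal_form:
  "\<exists>\<alpha> \<beta> :: nat \<Rightarrow> complex.
          (\<forall>i<d^2. norm (\<alpha> i) = 1 \<and> norm (\<beta> i) = 1)
        \<and> (\<forall>i<d^2. \<forall>j<d^2. i \<noteq> j \<longrightarrow>
              (cmod (braket (\<alpha> i *s x i) (\<beta> j *s y j)))^2 = (1 - t) / real d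
            \<and> braket (\<alpha> i *s x i) (\<beta> i *s y i) = complex_of_real (sqrt ((t * (real d ^ 2 - 1) + 1) / real d))
            \<and> braket (\<alpha> j *s x j) (\<alpha> i *s x i) * braket (\<beta> i *s y i) (\<beta> j *s y j) = complex_of_real t)"
proof -
  obtain \<beta> where unit: "\<forall>i<d^2. cmod (\<beta> i) = 1"
    and aligned: "\<forall>i<d^2. \<beta> i * braket (x i) (y i) = of_real (sqrt (real d * (B + t)))"
    and phases: "\<forall>i<d^2. \<forall>j<d^2. i \<noteq> j \<longrightarrow> cnj (\<beta> i) * \<beta> j * gram j i = of_real t"
    using phase_alignment by (elim exE conjE)
  show ?thesis
  proof (rule exI [of _ "\<lambda>_. 1"], rule exI [of _ \<beta>], intro conjI allI impI)
    fix i assume "i < d^2"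
    then show "norm ((\<lambda>_. 1 :: complex) i) = 1"
      by simp
  next
    fix i assume "i < d^2"
    then show "norm (\<beta> i) = 1"
      using unit by simp
  next
    fix i j assume "i < d^2" "j < d^2" "i \<noteq> j"
    have "cmod (braket ((\<lambda>_. 1) i *s x i) (\<beta> j *s y j)) = cmod (braket (x i) (y j))"
      using unit \<open>j < d^2\<close> by (simp add: norm_mult)
    then show "(cmod (braket ((\<lambda>_. 1) i *s x i) (\<beta> j *s y j)))^2 = (1 - t) / real d"
      using cross_overlap [OF \<open>i < d^2\<close> \<open>j < d^2\<close> \<open>i \<noteq> j\<close>] by simp
  next
    fix i j assume "i < d^2" "j < d^2" "i \<noteq> j"
    show "braket ((\<lambda>_. 1) i *s x i) (\<beta> i *s y i)
        = complex_of_real (sqrt ((t * (real d ^ 2 - 1) + 1) / real d))"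
      using aligned \<open>i < d^2\<close> by (simp add: diagonal_overlap_value)
  next
    fix i j assume "i < d^2" "j < d^2" "i \<noteq> j"
    show "braket ((\<lambda>_. 1) j *s x j) ((\<lambda>_. 1) i *s x i) * braket (\<beta> i *s y i) (\<beta> j *s y j)
        = complex_of_real t"
    proof -
      have "braket ((\<lambda>_. 1) j *s x j) ((\<lambda>_. 1) i *s x i) * braket (\<beta> i *s y i) (\<beta> j *s y j)
          = cnj (\<beta> i) * \<beta> j * gram j i"
        by (simp add: gram_def mult_ac)
      then show ?thesis
        using phases \<open>i < d^2\<close> \<open>j < d^2\<close> \<open>i \<noteq> j\<close> by simp
    qed
  qed
qed

end

theorem theorem1:
  fixes t :: real and w :: "nat \<Rightarrow> real" and x y :: "nat \<Rightarrow> complex^'n"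
  defines "d \<equiv> CARD('n)"
  assumes d2: "d \<ge> 2"
    and t_lo: "- 1 / (real d ^ 2 - 1) \<le> t" and t_hi: "t \<le> 1 / (real d + 1)" and t0: "t \<noteq> 0"
    and w_nonneg: "\<forall>i<d^2. w i \<ge> 0" and w_sum: "(\<Sum>i<d^2. w i) = 1"
    and x_unit: "\<forall>i<d^2. norm (x i) = 1" and y_unit: "\<forall>i<d^2. norm (y i) = 1"
    and decomp: "(\<Sum>i<d^2. w i *\<^sub>R kron (outer (x i)) (outer (y i)))
                 = (t / real d) *\<^sub>R swap_op + ((1 - t) / real d ^ 2) *\<^sub>R mat 1"
  shows "(\<forall>i<d^2. w i = 1 / real d ^ 2)
    \<and> tight_frame (d^2) x \<and> tight_frame (d^2) y
    \<and> inf_complete (d^2) x \<and> inf_complete (d^2) y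
    \<and> (\<exists>\<alpha> \<beta> :: nat \<Rightarrow> complex.
          (\<forall>i<d^2. norm (\<alpha> i) = 1 \<and> norm (\<beta> i) = 1)
        \<and> (\<forall>i<d^2. \<forall>j<d^2. i \<noteq> j \<longrightarrow>
              (cmod (braket (\<alpha> i *s x i) (\<beta> j *s y j)))^2 = (1 - t) / real d
            \<and> braket (\<alpha> i *s x i) (\<beta> i *s y i) = complex_of_real (sqrt ((t * (real d ^ 2 - 1) + 1) / real d))
            \<and> braket (\<alpha> j *s x j) (\<alpha> i *s x i) * braket (\<beta> i *s y i) (\<beta> j *s y j) = complex_of_real t))"
proof -
  interpret werner_decomposition d t w x y
    using d2 t_lo t_hi t0 w_nonneg x_unit y_unit decomp by unfold_locales (simp_all add: d_def)
  show ?thesis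
    using tight_frame_first tight_frame_second inf_complete_first inf_complete_second phase_normal_form
    by (simp add: weights_uniform)
qed

end
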